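(* Let $\Lambda$ be a row-finite $k$-graph such that the degree functor $d$ is $\mathbb{N}^k$-primitive for $\Lambda$. Then the system $(\Lambda,\mathbb{N}^k,d)$ is cofinal.
   Context: A $k$-graph is a countable category $\Lambda$ with a functor $d:\Lambda\to\mathbb{N}^k$ with unique factorisation; $\Lambda^n=d^{-1}(n)$, $\Lambda^0$ = vertices, $uXv=\{\lambda\in X:r(\lambda)=u,s(\lambda)=v\}$; row-finite: $v\Lambda^n$ finite. On $\mathbb{N}^k$, $h\ge_l g$ means $h-g\in\mathbb{N}^k$; $t$ is strictly positive if for every $s\in\mathbb{N}^k$ some multiple $nt\ge_l s$. $d$ is $\mathbb{N}^k$-primitive for $\Lambda$ if there is a strictly positive $t\in\mathbb{N}^k$ such that for all $v,w\in\Lambda^0$ and all $s\ge_l t$, $vd^{-1}(s)w=v\Lambda^sw\ne\emptyset$. The system $(\Lambda,\mathbb{N}^k,d)$ is cofinal if for all $v,w\in\Lambda^0$ and $a,b\in\mathbb{N}^k$ there is $N\in\mathbb{N}^k$ such that for every $\alpha\in w\Lambda^N$ there is $\beta\in v\Lambda s(\alpha)$ with $a+d(\beta)=b+d(\alpha)$. *)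

theory Defs
  imports "HOL-Library.Countable_Set"
begin

text \<open>Degrees live in N^k, represented as functions 'k => nat for a finite
index type 'k (so k = CARD('k)).\<close>

definition deg_add :: "('k \<Rightarrow> nat) \<Rightarrow> ('k \<Rightarrow> nat) \<Rightarrow> ('k \<Rightarrow> nat)" where
  "deg_add a b = (\<lambda>i. a i + b i)"

definition k_graph ::
  "'v set \<Rightarrow> 'a set \<Rightarrow> ('a \<Rightarrow> 'v) \<Rightarrow> ('a \<Rightarrow> 'v) \<Rightarrow> ('a \<Rightarrow> 'a \<Rightarrow> 'a)
   \<Rightarrow> ('v \<Rightarrow> 'a) \<Rightarrow> ('a \<Rightarrow> ('k::finite \<Rightarrow> nat)) \<Rightarrow> bool" where
  "k_graph V A rng src cmp ident d \<longleftrightarrow>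
     countable V \<and> countable A \<and>
     (\<forall>l\<in>A. rng l \<in> V \<and> src l \<in> V) \<and>
     (\<forall>v\<in>V. ident v \<in> A \<and> rng (ident v) = v \<and> src (ident v) = v) \<and>
     (\<forall>m\<in>A. \<forall>n\<in>A. src m = rng n \<longrightarrow>
        cmp m n \<in> A \<and> rng (cmp m n) = rng m \<and> src (cmp m n) = src n) \<and>
     (\<forall>m\<in>A. cmp (ident (rng m)) m = m \<and> cmp m (ident (src m)) = m) \<and>
     (\<forall>l\<in>A. \<forall>m\<in>A. \<forall>n\<in>A. src l = rng m \<longrightarrow> src m = rng n \<longrightarrow>
        cmp (cmp l m) n = cmp l (cmp m n)) \<and>
     (\<forall>v\<in>V. d (ident v) = (\<lambda>_. 0)) \<and>
     (\<forall>m\<in>A. \<forall>n\<in>A. src m = rng n \<longrightarrow> d (cmp m n) = deg_add (d m) (d n)) \<and>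
     (\<forall>l\<in>A. \<forall>m n. d l = deg_add m n \<longrightarrow>
        (\<exists>!p. fst p \<in> A \<and> snd p \<in> A \<and> src (fst p) = rng (snd p) \<and>
              d (fst p) = m \<and> d (snd p) = n \<and> cmp (fst p) (snd p) = l))"

definition paths :: "'a set \<Rightarrow> ('a \<Rightarrow> 'v) \<Rightarrow> ('a \<Rightarrow> 'v) \<Rightarrow> ('a \<Rightarrow> ('k \<Rightarrow> nat))
   \<Rightarrow> 'v \<Rightarrow> ('k \<Rightarrow> nat) \<Rightarrow> 'v \<Rightarrow> 'a set" where
  "paths A rng src d v n w = {l\<in>A. rng l = v \<and> d l = n \<and> src l = w}"

definition row_finite :: "'v set \<Rightarrow> 'a set \<Rightarrow> ('a \<Rightarrow> 'v) \<Rightarrow> ('a \<Rightarrow> ('k \<Rightarrow> nat)) \<Rightarrow> bool" where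
  "row_finite V A rng d \<longleftrightarrow> (\<forall>v\<in>V. \<forall>n. finite {l\<in>A. rng l = v \<and> d l = n})"

definition strictly_positive :: "('k \<Rightarrow> nat) \<Rightarrow> bool" where
  "strictly_positive t \<longleftrightarrow> (\<forall>s. \<exists>n::nat. s \<le> (\<lambda>i. n * t i))"

definition Nk_primitive :: "'v set \<Rightarrow> 'a set \<Rightarrow> ('a \<Rightarrow> 'v) \<Rightarrow> ('a \<Rightarrow> 'v)
   \<Rightarrow> ('a \<Rightarrow> ('k \<Rightarrow> nat)) \<Rightarrow> bool" where
  "Nk_primitive V A rng src d \<longleftrightarrow>
     (\<exists>t. strictly_positive t \<and>
        (\<forall>v\<in>V. \<forall>w\<in>V. \<forall>s. t \<le> s \<longrightarrow> paths A rng src d v s w \<noteq> {}))"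

definition cofinal :: "'v set \<Rightarrow> 'a set \<Rightarrow> ('a \<Rightarrow> 'v) \<Rightarrow> ('a \<Rightarrow> 'v)
   \<Rightarrow> ('a \<Rightarrow> ('k \<Rightarrow> nat)) \<Rightarrow> bool" where
  "cofinal V A rng src d \<longleftrightarrow>
     (\<forall>v\<in>V. \<forall>w\<in>V. \<forall>a b. \<exists>N. \<forall>\<alpha>\<in>A. rng \<alpha> = w \<and> d \<alpha> = N \<longrightarrow>
        (\<exists>\<beta>\<in>A. rng \<beta> = v \<and> src \<beta> = src \<alpha> \<and> deg_add a (d \<beta>) = deg_add b (d \<alpha>)))"

end

theory Submission
  imports Defs
begin

text \<open>If every pair of vertices is joined by paths of every degree \<open>s \<ge> t\<close>, take
\<open>N = t + a\<close>: for \<open>\<alpha>\<close> of degree \<open>N\<close> with range \<open>w\<close> choose \<open>\<beta>\<close> from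
\<open>s(\<alpha>)\<close> to \<open>v\<close> of degree \<open>b + t\<close>, so that
\<open>a + d(\<beta>) = a + b + t = b + d(\<alpha>)\<close>.\<close>

lemma deg_add_commute: "deg_add a b = deg_add b a"
  by (simp add: deg_add_def add.commute)

lemma deg_add_left_commute: "deg_add a (deg_add b c) = deg_add b (deg_add a c)"
  by (simp add: deg_add_def add.left_commute)

lemma le_deg_add_right: "t \<le> deg_add b t"
  by (simp add: deg_add_def le_fun_def)

lemma Nk_primitive_imp_cofinal:
  assumes src_in_V: "\<forall>l\<in>A. src l \<in> V"
    and "Nk_primitive V A rng src d"
  shows "cofinal V A rng src d"
  unfolding cofinal_def
proof (intro ballI allI)
  from assms(2) obtain t where
    paths_ne: "\<And>v w s. v \<in> V \<Longrightarrow> w \<in> V \<Longrightarrow> t \<le> s \<Longrightarrow> paths A rng src d v s w \<noteq> {}"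
    unfolding Nk_primitive_def by blast
  fix v w a b assume "v \<in> V" "w \<in> V"
  show "\<exists>N. \<forall>\<alpha>\<in>A. rng \<alpha> = w \<and> d \<alpha> = N \<longrightarrow>
      (\<exists>\<beta>\<in>A. rng \<beta> = v \<and> src \<beta> = src \<alpha> \<and> deg_add a (d \<beta>) = deg_add b (d \<alpha>))"
  proof (intro exI[of _ "deg_add t a"] ballI impI)
    fix \<alpha> assume "\<alpha> \<in> A" and \<alpha>: "rng \<alpha> = w \<and> d \<alpha> = deg_add t a"
    have "paths A rng src d v (deg_add b t) (src \<alpha>) \<noteq> {}"
      using paths_ne \<open>v \<in> V\<close> src_in_V \<open>\<alpha> \<in> A\<close> le_deg_add_right by blast
    then obtain \<beta> where "\<beta> \<in> A" "rng \<beta> = v" "src \<beta> = src \<alpha>" "d \<beta> = deg_add b t"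
      unfolding paths_def by blast
    moreover have "deg_add a (deg_add b t) = deg_add b (deg_add t a)"
      by (simp add: deg_add_left_commute deg_add_commute)
    ultimately show "\<exists>\<beta>\<in>A. rng \<beta> = v \<and> src \<beta> = src \<alpha> \<and> deg_add a (d \<beta>) = deg_add b (d \<alpha>)"
      using \<alpha> by metis
  qed
qed

theorem corollary5p10:
  fixes V :: "'v set" and A :: "'a set" and rng src :: "'a \<Rightarrow> 'v"
    and cmp :: "'a \<Rightarrow> 'a \<Rightarrow> 'a" and ident :: "'v \<Rightarrow> 'a"
    and d :: "'a \<Rightarrow> ('k::finite \<Rightarrow> nat)"
  assumes "k_graph V A rng src cmp ident d"
    and "row_finite V A rng d"
    and "Nk_primitive V A rng src d"
  shows "cofinal V A rng src d"
proof -
  have "\<forall>l\<in>A. src l \<in> V"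
    using assms(1) unfolding k_graph_def by blast
  then show ?thesis
    using assms(3) by (rule Nk_primitive_imp_cofinal)
qed

end
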